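(* Let $\mathcal{C}$ be a category and $A$ an object of $\mathcal{C}$ satisfying the axioms RC0, RC1, RC2 below. Then for every object $X$ of $\mathcal{C}$, the group $\mathrm{Aut}(A)$ acts transitively on the set $[A,X]$ by $(h,x)\mapsto x\circ h$.
   Context: An arrow $f\colon X\to Y$ is a strict epimorphism if for every arrow $g\colon X\to Z$ compatible with $f$ (for every object $C$ and all $u,v\colon C\to X$ with $f\circ u=f\circ v$ one has $g\circ u=g\circ v$) there is a unique $k\colon Y\to Z$ with $g=k\circ f$. For a group $H$ acting on $A$ by automorphisms (a homomorphism $H\to\mathrm{Aut}(A)^{op}$), the quotient $q\colon A\to A/H$ is an arrow with $q\circ h=q$ for all $h\in H$, universal among such arrows. Axioms: RC0: for every object $X$ there exists an arrow $A\to X$, and every arrow $A\to X$ is a strict epimorphism. RC1: for every subgroup $H\subseteq\mathrm{Aut}(A)$ the quotient $q\colon A\to A/H$ exists and the map $[A,A]\to[A,A/H]$, $f\mapsto q\circ f$, is surjective with $q\circ f=q\circ g$ iff $f=h\circ g$ for some $h\in H$. RC2: $[A,A]=\mathrm{Aut}(A)$. *)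

theory Defs
  imports Main
begin

text \<open>A (locally small) category: objects are the elements of type 'o, arrows are
  elements of type 'm, Hom X Y is the set of arrows X \<rightarrow> Y, cmp g f is g \<circ> f,
  ident X is the identity of X.\<close>

definition category :: "('o \<Rightarrow> 'o \<Rightarrow> 'm set) \<Rightarrow> ('m \<Rightarrow> 'm \<Rightarrow> 'm) \<Rightarrow> ('o \<Rightarrow> 'm) \<Rightarrow> bool" where
  "category Hom cmp ident \<longleftrightarrow>
     (\<forall>X Y Z f g. f \<in> Hom X Y \<longrightarrow> g \<in> Hom Y Z \<longrightarrow> cmp g f \<in> Hom X Z) \<and>
     (\<forall>X. ident X \<in> Hom X X) \<and>
     (\<forall>X Y f. f \<in> Hom X Y \<longrightarrow> cmp (ident Y) f = f \<and> cmp f (ident X) = f) \<and>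
     (\<forall>W X Y Z f g h. f \<in> Hom W X \<longrightarrow> g \<in> Hom X Y \<longrightarrow> h \<in> Hom Y Z \<longrightarrow>
         cmp h (cmp g f) = cmp (cmp h g) f) \<and>
     (\<forall>X Y X' Y' f. f \<in> Hom X Y \<longrightarrow> f \<in> Hom X' Y' \<longrightarrow> X = X' \<and> Y = Y')"

definition strict_epi :: "('o \<Rightarrow> 'o \<Rightarrow> 'm set) \<Rightarrow> ('m \<Rightarrow> 'm \<Rightarrow> 'm) \<Rightarrow> 'o \<Rightarrow> 'o \<Rightarrow> 'm \<Rightarrow> bool" where
  "strict_epi Hom cmp X Y f \<longleftrightarrow> f \<in> Hom X Y \<and>
     (\<forall>Z g. g \<in> Hom X Z \<longrightarrow>
        (\<forall>C u v. u \<in> Hom C X \<longrightarrow> v \<in> Hom C X \<longrightarrow> cmp f u = cmp f v \<longrightarrow> cmp g u = cmp g v) \<longrightarrow>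
        (\<exists>!k. k \<in> Hom Y Z \<and> g = cmp k f))"

definition Aut :: "('o \<Rightarrow> 'o \<Rightarrow> 'm set) \<Rightarrow> ('m \<Rightarrow> 'm \<Rightarrow> 'm) \<Rightarrow> ('o \<Rightarrow> 'm) \<Rightarrow> 'o \<Rightarrow> 'm set" where
  "Aut Hom cmp ident A = {h \<in> Hom A A. \<exists>h' \<in> Hom A A. cmp h' h = ident A \<and> cmp h h' = ident A}"

definition aut_subgroup :: "('o \<Rightarrow> 'o \<Rightarrow> 'm set) \<Rightarrow> ('m \<Rightarrow> 'm \<Rightarrow> 'm) \<Rightarrow> ('o \<Rightarrow> 'm) \<Rightarrow> 'o \<Rightarrow> 'm set \<Rightarrow> bool" where
  "aut_subgroup Hom cmp ident A H \<longleftrightarrow> H \<subseteq> Aut Hom cmp ident A \<and> ident A \<in> H \<and>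
     (\<forall>g \<in> H. \<forall>h \<in> H. cmp g h \<in> H) \<and>
     (\<forall>h \<in> H. \<exists>h' \<in> H. cmp h' h = ident A \<and> cmp h h' = ident A)"

definition is_quotient :: "('o \<Rightarrow> 'o \<Rightarrow> 'm set) \<Rightarrow> ('m \<Rightarrow> 'm \<Rightarrow> 'm) \<Rightarrow> 'o \<Rightarrow> 'm set \<Rightarrow> 'o \<Rightarrow> 'm \<Rightarrow> bool" where
  "is_quotient Hom cmp A H Q q \<longleftrightarrow> q \<in> Hom A Q \<and> (\<forall>h \<in> H. cmp q h = q) \<and>
     (\<forall>Z g. g \<in> Hom A Z \<longrightarrow> (\<forall>h \<in> H. cmp g h = g) \<longrightarrow> (\<exists>!k. k \<in> Hom Q Z \<and> g = cmp k q))"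

definition RC0 :: "('o \<Rightarrow> 'o \<Rightarrow> 'm set) \<Rightarrow> ('m \<Rightarrow> 'm \<Rightarrow> 'm) \<Rightarrow> 'o \<Rightarrow> bool" where
  "RC0 Hom cmp A \<longleftrightarrow> (\<forall>X. Hom A X \<noteq> {} \<and> (\<forall>f \<in> Hom A X. strict_epi Hom cmp A X f))"

definition RC1 :: "('o \<Rightarrow> 'o \<Rightarrow> 'm set) \<Rightarrow> ('m \<Rightarrow> 'm \<Rightarrow> 'm) \<Rightarrow> ('o \<Rightarrow> 'm) \<Rightarrow> 'o \<Rightarrow> bool" where
  "RC1 Hom cmp ident A \<longleftrightarrow> (\<forall>H. aut_subgroup Hom cmp ident A H \<longrightarrow>
     (\<exists>Q q. is_quotient Hom cmp A H Q q \<and>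
        (\<forall>p \<in> Hom A Q. \<exists>f \<in> Hom A A. p = cmp q f) \<and>
        (\<forall>f \<in> Hom A A. \<forall>g \<in> Hom A A. cmp q f = cmp q g \<longleftrightarrow> (\<exists>h \<in> H. f = cmp h g))))"

definition RC2 :: "('o \<Rightarrow> 'o \<Rightarrow> 'm set) \<Rightarrow> ('m \<Rightarrow> 'm \<Rightarrow> 'm) \<Rightarrow> ('o \<Rightarrow> 'm) \<Rightarrow> 'o \<Rightarrow> bool" where
  "RC2 Hom cmp ident A \<longleftrightarrow> Hom A A = Aut Hom cmp ident A"

end

theory Submission
  imports Defs
begin

text \<open>Fix x, y : A \<rightarrow> X and let H be the stabiliser of x in Aut(A). Every endomorphism of A
  is an automorphism and every object receives an arrow from A, which is a strict epimorphism;
  so arrows C \<rightarrow> A equalised by x differ, after precomposition with some A \<rightarrow> C, by an element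
  of H. Hence the quotient q : A \<rightarrow> A/H and x factor through each other, x = k q and q = k' x,
  with k k' = 1 because x is epi. Lifting k' y along q to some f : A \<rightarrow> A gives
  y = k k' y = k q f = x f.\<close>

locale cat =
  fixes Hom :: "'o \<Rightarrow> 'o \<Rightarrow> 'm set"
    and cmp :: "'m \<Rightarrow> 'm \<Rightarrow> 'm" (infixr "\<cdot>" 55)
    and ident :: "'o \<Rightarrow> 'm"
  assumes category: "category Hom cmp ident"
begin

lemma comp_in_Hom: "f \<in> Hom X Y \<Longrightarrow> g \<in> Hom Y Z \<Longrightarrow> g \<cdot> f \<in> Hom X Z"
  using category unfolding category_def by (elim conjE) fast

lemma ident_in_Hom: "ident X \<in> Hom X X"
  using category unfolding category_def by (elim conjE) fast

lemma comp_ident_left [simp]: "f \<in> Hom X Y \<Longrightarrow> ident Y \<cdot> f = f"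
  using category unfolding category_def by (elim conjE) fast

lemma comp_ident_right [simp]: "f \<in> Hom X Y \<Longrightarrow> f \<cdot> ident X = f"
  using category unfolding category_def by (elim conjE) fast

lemma comp_assoc:
  "f \<in> Hom W X \<Longrightarrow> g \<in> Hom X Y \<Longrightarrow> h \<in> Hom Y Z \<Longrightarrow> h \<cdot> (g \<cdot> f) = (h \<cdot> g) \<cdot> f"
  using category unfolding category_def by (elim conjE) fast

lemma strict_epi_in_Hom: "strict_epi Hom cmp X Y f \<Longrightarrow> f \<in> Hom X Y"
  unfolding strict_epi_def by blast

lemma strict_epi_factor:
  assumes "strict_epi Hom cmp X Y f" and "g \<in> Hom X Z"
    and "\<And>C u v. u \<in> Hom C X \<Longrightarrow> v \<in> Hom C X \<Longrightarrow> f \<cdot> u = f \<cdot> v \<Longrightarrow> g \<cdot> u = g \<cdot> v"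
  obtains k where "k \<in> Hom Y Z" "g = k \<cdot> f"
  using assms unfolding strict_epi_def by blast

lemma strict_epi_cancel:
  assumes f: "strict_epi Hom cmp X Y f"
    and a: "a \<in> Hom Y Z" and b: "b \<in> Hom Y Z" and eq: "a \<cdot> f = b \<cdot> f"
  shows "a = b"
proof -
  have f_Hom: "f \<in> Hom X Y" using f by (rule strict_epi_in_Hom)
  have af: "a \<cdot> f \<in> Hom X Z" using f_Hom a by (rule comp_in_Hom)
  have "\<forall>C u v. u \<in> Hom C X \<longrightarrow> v \<in> Hom C X \<longrightarrow> f \<cdot> u = f \<cdot> v \<longrightarrow>
      (a \<cdot> f) \<cdot> u = (a \<cdot> f) \<cdot> v"
  proof (intro allI impI)
    fix C u v assume "u \<in> Hom C X" "v \<in> Hom C X" "f \<cdot> u = f \<cdot> v"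
    then show "(a \<cdot> f) \<cdot> u = (a \<cdot> f) \<cdot> v" using comp_assoc[OF _ f_Hom a] by metis
  qed
  then have "\<exists>!k. k \<in> Hom Y Z \<and> a \<cdot> f = k \<cdot> f"
    using f af unfolding strict_epi_def by blast
  then show ?thesis using a b eq by blast
qed

lemma mutual_factors_of_strict_epi:
  assumes x: "strict_epi Hom cmp A X x" and k: "k \<in> Hom Q X" and k': "k' \<in> Hom X Q"
    and x_eq: "x = k \<cdot> q" and q_eq: "q = k' \<cdot> x"
  shows "k \<cdot> k' = ident X"
proof (rule strict_epi_cancel[OF x])
  have x_Hom: "x \<in> Hom A X" using x by (rule strict_epi_in_Hom)
  have "(k \<cdot> k') \<cdot> x = k \<cdot> (k' \<cdot> x)" using comp_assoc[OF x_Hom k' k] by simp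
  also have "\<dots> = x" by (simp only: q_eq[symmetric] x_eq[symmetric])
  finally show "(k \<cdot> k') \<cdot> x = ident X \<cdot> x" using x_Hom by simp
  show "k \<cdot> k' \<in> Hom X X" using k' k by (rule comp_in_Hom)
qed (rule ident_in_Hom)

abbreviation Auts :: "'o \<Rightarrow> 'm set" where
  "Auts \<equiv> Aut Hom cmp ident"

lemma Aut_in_Hom: "h \<in> Auts A \<Longrightarrow> h \<in> Hom A A"
  unfolding Aut_def by blast

lemma Aut_inverse:
  assumes "h \<in> Auts A"
  obtains h' where "h' \<in> Auts A" "h' \<cdot> h = ident A" "h \<cdot> h' = ident A"
  using assms unfolding Aut_def by blast

lemma ident_in_Aut: "ident A \<in> Auts A"
  unfolding Aut_def using ident_in_Hom by fastforce

lemma Aut_comp_closed: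
  assumes g: "g \<in> Auts A" and h: "h \<in> Auts A"
  shows "g \<cdot> h \<in> Auts A"
proof -
  obtain g' where g': "g' \<in> Auts A" "g' \<cdot> g = ident A" "g \<cdot> g' = ident A"
    using g by (rule Aut_inverse)
  obtain h' where h': "h' \<in> Auts A" "h' \<cdot> h = ident A" "h \<cdot> h' = ident A"
    using h by (rule Aut_inverse)
  note Homs = g[THEN Aut_in_Hom] h[THEN Aut_in_Hom] g'(1)[THEN Aut_in_Hom] h'(1)[THEN Aut_in_Hom]
  have gh: "g \<cdot> h \<in> Hom A A" and hg': "h' \<cdot> g' \<in> Hom A A"
    using Homs comp_in_Hom by blast+
  have "(h' \<cdot> g') \<cdot> (g \<cdot> h) = h' \<cdot> ((g' \<cdot> g) \<cdot> h)"
    using comp_assoc[OF gh Homs(3,4)] comp_assoc[OF Homs(2,1,3)] by simp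
  then have left: "(h' \<cdot> g') \<cdot> (g \<cdot> h) = ident A" using Homs g'(2) h'(2) by simp
  have "(g \<cdot> h) \<cdot> (h' \<cdot> g') = g \<cdot> ((h \<cdot> h') \<cdot> g')"
    using comp_assoc[OF hg' Homs(2,1)] comp_assoc[OF Homs(3,4,2)] by simp
  then have right: "(g \<cdot> h) \<cdot> (h' \<cdot> g') = ident A" using Homs g'(3) h'(3) by simp
  show ?thesis using gh hg' left right unfolding Aut_def by blast
qed

definition Stab :: "'o \<Rightarrow> 'm \<Rightarrow> 'm set" where
  "Stab A x = {h \<in> Auts A. x \<cdot> h = x}"

lemma aut_subgroup_Stab:
  assumes x: "x \<in> Hom A X"
  shows "aut_subgroup Hom cmp ident A (Stab A x)"
  unfolding aut_subgroup_def
proof (intro conjI ballI)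
  show "Stab A x \<subseteq> Auts A" unfolding Stab_def by blast
  show "ident A \<in> Stab A x" unfolding Stab_def using ident_in_Aut x by simp
next
  fix g h assume "g \<in> Stab A x" "h \<in> Stab A x"
  then have g: "g \<in> Auts A" "x \<cdot> g = x" and h: "h \<in> Auts A" "x \<cdot> h = x"
    unfolding Stab_def by auto
  have "x \<cdot> (g \<cdot> h) = x" using comp_assoc[OF Aut_in_Hom Aut_in_Hom x] g h by simp
  then show "g \<cdot> h \<in> Stab A x" unfolding Stab_def using Aut_comp_closed g(1) h(1) by blast
next
  fix h assume h: "h \<in> Stab A x"
  then obtain h' where h': "h' \<in> Auts A" "h' \<cdot> h = ident A" "h \<cdot> h' = ident A"
    unfolding Stab_def by (blast elim: Aut_inverse)
  have Homs: "h \<in> Hom A A" "h' \<in> Hom A A" using h h'(1) unfolding Stab_def by (auto intro: Aut_in_Hom)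
  have "x \<cdot> h' = (x \<cdot> h) \<cdot> h'" using h unfolding Stab_def by simp
  also have "\<dots> = x \<cdot> (h \<cdot> h')" using comp_assoc[OF Homs(2,1) x] by simp
  also have "\<dots> = x" using h'(3) x by simp
  finally show "\<exists>h'\<in>Stab A x. h' \<cdot> h = ident A \<and> h \<cdot> h' = ident A"
    using h' unfolding Stab_def by blast
qed

end

locale rc_object = cat +
  fixes A
  assumes RC0: "RC0 Hom cmp A" and RC1: "RC1 Hom cmp ident A" and RC2: "RC2 Hom cmp ident A"
begin

lemma Hom_from_nonempty: "Hom A X \<noteq> {}"
  using RC0 unfolding RC0_def by blast

lemma strict_epi_from: "x \<in> Hom A X \<Longrightarrow> strict_epi Hom cmp A X x"
  using RC0 unfolding RC0_def by blast

lemma Aut_eq_Hom: "Auts A = Hom A A"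
  using RC2 unfolding RC2_def by simp

lemma equalised_endos_differ_by_Stab:
  assumes x: "x \<in> Hom A X" and u: "u \<in> Hom A A" and v: "v \<in> Hom A A" and eq: "x \<cdot> u = x \<cdot> v"
  obtains h where "h \<in> Stab A x" "u = h \<cdot> v"
proof -
  obtain w where w: "w \<in> Hom A A" "w \<cdot> v = ident A" "v \<cdot> w = ident A"
    using Aut_inverse[of v A] v unfolding Aut_eq_Hom by blast
  have uw: "u \<cdot> w \<in> Hom A A" using w(1) u by (rule comp_in_Hom)
  have "x \<cdot> (u \<cdot> w) = (x \<cdot> v) \<cdot> w" using comp_assoc[OF w(1) u x] eq by simp
  also have "\<dots> = x" using comp_assoc[OF w(1) v x] w x by simp
  finally have "u \<cdot> w \<in> Stab A x" using uw unfolding Stab_def Aut_eq_Hom by simp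
  moreover have "u = (u \<cdot> w) \<cdot> v" using comp_assoc[OF v w(1) u] w u by simp
  ultimately show thesis by (rule that)
qed

lemma Stab_invariant_compatible:
  assumes x: "x \<in> Hom A X" and q: "q \<in> Hom A Q" and q_inv: "\<forall>h \<in> Stab A x. q \<cdot> h = q"
    and u: "u \<in> Hom C A" and v: "v \<in> Hom C A" and eq: "x \<cdot> u = x \<cdot> v"
  shows "q \<cdot> u = q \<cdot> v"
proof -
  obtain c where c: "c \<in> Hom A C" using Hom_from_nonempty by blast
  have uc: "u \<cdot> c \<in> Hom A A" and vc: "v \<cdot> c \<in> Hom A A"
    using comp_in_Hom[OF c u] comp_in_Hom[OF c v] .
  have "x \<cdot> (u \<cdot> c) = x \<cdot> (v \<cdot> c)" using comp_assoc[OF c u x] comp_assoc[OF c v x] eq by simp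
  then obtain h where h: "h \<in> Stab A x" "u \<cdot> c = h \<cdot> (v \<cdot> c)"
    using equalised_endos_differ_by_Stab[OF x uc vc] by blast
  have h_Hom: "h \<in> Hom A A" using h(1) unfolding Stab_def Aut_eq_Hom by blast
  have "(q \<cdot> u) \<cdot> c = (q \<cdot> h) \<cdot> (v \<cdot> c)"
    using comp_assoc[OF c u q] comp_assoc[OF vc h_Hom q] h(2) by simp
  also have "\<dots> = (q \<cdot> v) \<cdot> c" using comp_assoc[OF c v q] q_inv h(1) by simp
  finally show ?thesis
    by (rule strict_epi_cancel[OF strict_epi_from[OF c] comp_in_Hom[OF u q] comp_in_Hom[OF v q]])
qed

lemma Aut_acts_transitively:
  assumes x: "x \<in> Hom A X" and y: "y \<in> Hom A X"
  obtains f where "f \<in> Auts A" "y = x \<cdot> f"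
proof -
  obtain Q q where quot: "is_quotient Hom cmp A (Stab A x) Q q"
    and lift: "\<forall>p \<in> Hom A Q. \<exists>f \<in> Hom A A. p = q \<cdot> f"
    using RC1 aut_subgroup_Stab[OF x] unfolding RC1_def by blast
  have q: "q \<in> Hom A Q" and q_inv: "\<forall>h \<in> Stab A x. q \<cdot> h = q"
    using quot unfolding is_quotient_def by auto
  obtain k where k: "k \<in> Hom Q X" "x = k \<cdot> q"
    using quot x unfolding is_quotient_def Stab_def by blast
  obtain k' where k': "k' \<in> Hom X Q" "q = k' \<cdot> x"
    using strict_epi_factor[OF strict_epi_from[OF x] q]
      Stab_invariant_compatible[OF x q q_inv] by blast
  have kk': "k \<cdot> k' = ident X"
    using mutual_factors_of_strict_epi[OF strict_epi_from[OF x] k(1) k'(1) k(2) k'(2)] .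
  obtain f where f: "f \<in> Hom A A" "k' \<cdot> y = q \<cdot> f"
    using lift comp_in_Hom[OF y k'(1)] by blast
  have "y = (k \<cdot> k') \<cdot> y" using kk' y by simp
  also have "\<dots> = k \<cdot> (q \<cdot> f)" using comp_assoc[OF y k'(1) k(1)] f(2) by simp
  also have "\<dots> = x \<cdot> f" using comp_assoc[OF f(1) q k(1)] k(2) by simp
  finally show thesis using that f(1) unfolding Aut_eq_Hom by blast
qed

end

theorem proposition2p10:
  fixes Hom :: "'o \<Rightarrow> 'o \<Rightarrow> 'm set" and cmp :: "'m \<Rightarrow> 'm \<Rightarrow> 'm" and ident :: "'o \<Rightarrow> 'm"
    and A :: 'o
  assumes "category Hom cmp ident"
    and "RC0 Hom cmp A" and "RC1 Hom cmp ident A" and "RC2 Hom cmp ident A"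
  shows "\<forall>X. (\<forall>h \<in> Aut Hom cmp ident A. \<forall>x \<in> Hom A X. cmp x h \<in> Hom A X) \<and>
             Hom A X \<noteq> {} \<and>
             (\<forall>x \<in> Hom A X. \<forall>y \<in> Hom A X. \<exists>h \<in> Aut Hom cmp ident A. y = cmp x h)"
proof -
  interpret rc_object Hom cmp ident A
    using assms by unfold_locales
  have "cmp x h \<in> Hom A X" if "h \<in> Aut Hom cmp ident A" "x \<in> Hom A X" for h x X
    using comp_in_Hom[OF Aut_in_Hom] that .
  moreover have "\<exists>h \<in> Aut Hom cmp ident A. y = cmp x h" if "x \<in> Hom A X" "y \<in> Hom A X" for x y X
    using Aut_acts_transitively[OF that] by blast
  ultimately show ?thesis using Hom_from_nonempty by blast
qed

end
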